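(* Let $0\le r\le m$ and let $\mathbf v_r\in\mathrm{GF}(q^m)^r$ have rank $r$. The rank weight enumerator of $\mathcal L_r=\langle\mathbf v_r\rangle^\perp\subseteq\mathrm{GF}(q^m)^r$ depends only on $r$ and equals $$W^{\mathrm R}_{\mathcal L_r}(x,y)=q^{-m}\left\{\big[x+(q^m-1)y\big]^{[r]}+(q^m-1)(x-y)^{[r]}\right\}.$$
   Context: The rank of a vector over $\mathrm{GF}(q^m)$ is the maximum number of its coordinates linearly independent over $\mathrm{GF}(q)$. $\langle\mathbf v\rangle=\{a\mathbf v:a\in\mathrm{GF}(q^m)\}$ and $\perp$ denotes the dual with respect to the standard inner product $\sum_iu_iv_i$. The rank weight enumerator of a code $\mathcal C\subseteq\mathrm{GF}(q^m)^N$ is $\sum_{\mathbf u\in\mathcal C}y^{\mathrm{rk}(\mathbf u)}x^{N-\mathrm{rk}(\mathbf u)}$. $q$-product: for homogeneous polynomials $a(x,y;m)=\sum_{i=0}^r a_i(m)y^ix^{r-i}$ and $b(x,y;m)=\sum_{j=0}^s b_j(m)y^jx^{s-j}$ with coefficients real functions of $m$ (out-of-range coefficients zero), $a*b=\sum_{u=0}^{r+s}c_u(m)y^ux^{r+s-u}$ with $c_u(m)=\sum_{i=0}^u q^{is}a_i(m)b_{u-i}(m-i)$; $q$-powers: $a^{[0]}=1$, $a^{[n]}=a^{[n-1]}*a$. The polynomial $x+(q^m-1)y$ has coefficients $1$ and $q^m-1$, and $x-y$ has coefficients $1,-1$. *)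

theory Defs
  imports Complex_Main
begin

definition vecs :: "nat \<Rightarrow> (nat \<Rightarrow> 'a::zero) set" where
  "vecs N = {u. \<forall>i\<ge>N. u i = 0}"

definition is_subfield :: "'a::field set \<Rightarrow> bool" where
  "is_subfield K \<longleftrightarrow> 0 \<in> K \<and> 1 \<in> K \<and>
     (\<forall>a\<in>K. \<forall>b\<in>K. a + b \<in> K \<and> a * b \<in> K \<and> - a \<in> K) \<and>
     (\<forall>a\<in>K. a \<noteq> 0 \<longrightarrow> inverse a \<in> K)"

definition lin_indep_over :: "'a::field set \<Rightarrow> (nat \<Rightarrow> 'a) \<Rightarrow> nat set \<Rightarrow> bool" where
  "lin_indep_over K u S \<longleftrightarrow>
     (\<forall>c. (\<forall>i\<in>S. c i \<in> K) \<and> (\<Sum>i\<in>S. c i * u i) = 0 \<longrightarrow> (\<forall>i\<in>S. c i = 0))"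

definition rank_over :: "'a::field set \<Rightarrow> nat \<Rightarrow> (nat \<Rightarrow> 'a) \<Rightarrow> nat" where
  "rank_over K N u = Max (card ` {S. S \<subseteq> {..<N} \<and> lin_indep_over K u S})"

definition span1 :: "nat \<Rightarrow> (nat \<Rightarrow> 'a::field) \<Rightarrow> (nat \<Rightarrow> 'a) set" where
  "span1 N v = {(\<lambda>i. a * v i) | a. True}"

definition dual_code :: "nat \<Rightarrow> (nat \<Rightarrow> 'a::field) set \<Rightarrow> (nat \<Rightarrow> 'a) set" where
  "dual_code N C = {u \<in> vecs N. \<forall>c\<in>C. (\<Sum>i<N. u i * c i) = 0}"

definition rank_wt_enum :: "'a::field set \<Rightarrow> nat \<Rightarrow> (nat \<Rightarrow> 'a) set \<Rightarrow> real \<Rightarrow> real \<Rightarrow> real" where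
  "rank_wt_enum K N C x y = (\<Sum>u\<in>C. y ^ rank_over K N u * x ^ (N - rank_over K N u))"

text \<open>A homogeneous polynomial is a pair (degree, coefficients), the coefficient a i m being
  the coefficient of y^i x^(deg-i), a real function of m. Coefficients outside 0..deg count as zero.\<close>
type_synonym hpoly = "nat \<times> (nat \<Rightarrow> real \<Rightarrow> real)"

definition hcoeff :: "hpoly \<Rightarrow> nat \<Rightarrow> real \<Rightarrow> real" where
  "hcoeff a i m = (if i \<le> fst a then snd a i m else 0)"

definition heval :: "hpoly \<Rightarrow> real \<Rightarrow> real \<Rightarrow> real \<Rightarrow> real" where
  "heval a x y m = (\<Sum>i\<le>fst a. hcoeff a i m * y ^ i * x ^ (fst a - i))"

definition qprod :: "real \<Rightarrow> hpoly \<Rightarrow> hpoly \<Rightarrow> hpoly" where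
  "qprod q a b = (fst a + fst b,
     (\<lambda>u m. \<Sum>i\<le>u. q ^ (i * fst b) * hcoeff a i m * hcoeff b (u - i) (m - real i)))"

fun qpow :: "real \<Rightarrow> hpoly \<Rightarrow> nat \<Rightarrow> hpoly" where
  "qpow q a 0 = (0, (\<lambda>i m. if i = 0 then 1 else 0))"
| "qpow q a (Suc n) = qprod q (qpow q a n) a"

text \<open>x + (q^m - 1) y\<close>
definition hp_xqy :: "real \<Rightarrow> hpoly" where
  "hp_xqy q = (1, (\<lambda>i m. if i = 0 then 1 else if i = 1 then q powr m - 1 else 0))"

definition hp_xmy :: hpoly where
  "hp_xmy = (1, (\<lambda>i m. if i = 0 then 1 else if i = 1 then -1 else 0))"

end

(*
  Fix v of rank r and count the vectors u in GF(q^m)^r of rank w with u . v = b.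
  Splitting off the last coordinate, u = (u', t) has rank rk u' or rk u' + 1 according as t
  does or does not lie in the GF(q)-span of the coordinates of u', and since v_r <> 0 the
  value of b determines t from u'.  The number of u' of rank w whose forced t lies in their
  own span is computed by averaging over all shifts v + c v_r with c in GF(q)^r, which have
  full rank again: a point of the span of u' is hit by exactly q^(r-w) of the vectors c.
  The resulting recursion in r depends on b only through whether b = 0, and it is exactly
  the recursion defining the coefficients of the q-powers in
  q^(-m) ([x + (q^m - 1) y]^[r] + (q^m - 1 or -1) (x - y)^[r]).
  The dual of <v> is the case b = 0.
*)
theory Submission
  imports Defs "HOL-Library.FuncSet"
begin

lemma subfield_zero: "is_subfield K \<Longrightarrow> 0 \<in> K"
  and subfield_one: "is_subfield K \<Longrightarrow> 1 \<in> K"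
  and subfield_add: "is_subfield K \<Longrightarrow> a \<in> K \<Longrightarrow> b \<in> K \<Longrightarrow> a + b \<in> K"
  and subfield_mult: "is_subfield K \<Longrightarrow> a \<in> K \<Longrightarrow> b \<in> K \<Longrightarrow> a * b \<in> K"
  and subfield_uminus: "is_subfield K \<Longrightarrow> a \<in> K \<Longrightarrow> - a \<in> K"
  by (simp_all add: is_subfield_def)

lemma subfield_diff: "is_subfield K \<Longrightarrow> a \<in> K \<Longrightarrow> b \<in> K \<Longrightarrow> a - b \<in> K"
  using subfield_add[of K a "- b"] subfield_uminus[of K b] by simp

lemma subfield_divide: "is_subfield K \<Longrightarrow> a \<in> K \<Longrightarrow> b \<in> K \<Longrightarrow> a / b \<in> K"
  by (cases "b = 0") (auto simp: is_subfield_def divide_inverse)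

lemma subfield_sum: "is_subfield K \<Longrightarrow> (\<And>i. i \<in> A \<Longrightarrow> f i \<in> K) \<Longrightarrow> sum f A \<in> K"
  by (induction A rule: infinite_finite_induct) (auto simp: subfield_zero subfield_add)

lemma card_subfield_gt_1:
  assumes "is_subfield K" and "finite K"
  shows "card K > 1"
proof -
  have "{0, 1} \<subseteq> K" using assms(1) by (simp add: subfield_zero subfield_one)
  then have "card {0, 1 :: 'a} \<le> card K" using assms(2) by (rule card_mono[rotated])
  then show ?thesis by simp
qed

definition coeff_vecs :: "'a::zero set \<Rightarrow> nat set \<Rightarrow> (nat \<Rightarrow> 'a) set" where
  "coeff_vecs K A = {c. (\<forall>i\<in>A. c i \<in> K) \<and> (\<forall>i. i \<notin> A \<longrightarrow> c i = 0)}"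

lemma bij_betw_coeff_vecs_PiE:
  "bij_betw (\<lambda>c. restrict c A) (coeff_vecs K A) (PiE A (\<lambda>_. K))"
  by (rule bij_betw_byWitness[where f' = "\<lambda>f i. if i \<in> A then f i else 0"])
    (auto simp: coeff_vecs_def PiE_def extensional_def fun_eq_iff)

lemma card_coeff_vecs: "finite A \<Longrightarrow> card (coeff_vecs K A) = card K ^ card A"
  using bij_betw_same_card[OF bij_betw_coeff_vecs_PiE[of A K]] by (simp add: card_PiE)

lemma finite_coeff_vecs: "finite A \<Longrightarrow> finite K \<Longrightarrow> finite (coeff_vecs K A)"
  using bij_betw_finite[OF bij_betw_coeff_vecs_PiE[of A K]] by (simp add: finite_PiE)

lemma vecs_eq_coeff_vecs: "vecs N = coeff_vecs UNIV {..<N}"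
  by (auto simp: vecs_def coeff_vecs_def)

lemma finite_vecs: "finite (vecs N :: (nat \<Rightarrow> 'a::{zero,finite}) set)"
  by (simp add: vecs_eq_coeff_vecs finite_coeff_vecs)

definition kspan :: "'a::field set \<Rightarrow> nat set \<Rightarrow> (nat \<Rightarrow> 'a) \<Rightarrow> 'a set" where
  "kspan K A u = {\<Sum>i\<in>A. c i * u i | c. \<forall>i\<in>A. c i \<in> K}"

lemma kspanI: "\<forall>i\<in>A. c i \<in> K \<Longrightarrow> x = (\<Sum>i\<in>A. c i * u i) \<Longrightarrow> x \<in> kspan K A u"
  unfolding kspan_def by blast

lemma kspanE:
  assumes "x \<in> kspan K A u"
  obtains c where "\<forall>i\<in>A. c i \<in> K" and "x = (\<Sum>i\<in>A. c i * u i)"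
  using assms unfolding kspan_def by blast

lemma kspan_eq_image: "kspan K A u = (\<lambda>c. \<Sum>i\<in>A. c i * u i) ` coeff_vecs K A"
proof
  show "kspan K A u \<subseteq> (\<lambda>c. \<Sum>i\<in>A. c i * u i) ` coeff_vecs K A"
  proof
    fix x assume "x \<in> kspan K A u"
    then obtain c where c: "\<forall>i\<in>A. c i \<in> K" and x: "x = (\<Sum>i\<in>A. c i * u i)"
      by (rule kspanE)
    let ?c = "\<lambda>i. if i \<in> A then c i else 0"
    have "?c \<in> coeff_vecs K A" using c by (simp add: coeff_vecs_def)
    moreover have "x = (\<Sum>i\<in>A. ?c i * u i)" using x by simp
    ultimately show "x \<in> (\<lambda>c. \<Sum>i\<in>A. c i * u i) ` coeff_vecs K A"
      by (rule rev_image_eqI[where x = "?c"])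
  qed
qed (auto simp: coeff_vecs_def intro: kspanI)

lemma kspan_cong:
  assumes "\<And>i. i \<in> A \<Longrightarrow> u i = u' i"
  shows "kspan K A u = kspan K A u'"
proof -
  have "(\<Sum>i\<in>A. c i * u i) = (\<Sum>i\<in>A. c i * u' i)" for c
    using assms by (intro sum.cong) auto
  then show ?thesis by (simp add: kspan_def)
qed

lemma kspan_sum:
  assumes "is_subfield K" and "\<And>j. j \<in> B \<Longrightarrow> f j \<in> kspan K A u"
  shows "sum f B \<in> kspan K A u"
  using assms(2)
proof (induction B rule: infinite_finite_induct)
  case (insert j B)
  have "f j \<in> kspan K A u" using insert.prems by simp
  then obtain c where c: "\<forall>i\<in>A. c i \<in> K" "f j = (\<Sum>i\<in>A. c i * u i)"
    by (rule kspanE)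
  have "sum f B \<in> kspan K A u" using insert.IH insert.prems by simp
  then obtain d where d: "\<forall>i\<in>A. d i \<in> K" "sum f B = (\<Sum>i\<in>A. d i * u i)"
    by (rule kspanE)
  show ?case
  proof (rule kspanI)
    show "\<forall>i\<in>A. c i + d i \<in> K" using c d assms(1) by (simp add: subfield_add)
    show "sum f (insert j B) = (\<Sum>i\<in>A. (c i + d i) * u i)"
      using c d insert.hyps by (simp add: sum.distrib distrib_right)
  qed
qed (use assms(1) in \<open>auto intro!: kspanI[of _ "\<lambda>_. 0"] simp: subfield_zero\<close>)

lemma kspan_smult:
  assumes "is_subfield K" and "a \<in> K" and "x \<in> kspan K A u"
  shows "a * x \<in> kspan K A u"
proof -
  obtain c where c: "\<forall>i\<in>A. c i \<in> K" and x: "x = (\<Sum>i\<in>A. c i * u i)"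
    using assms(3) by (rule kspanE)
  show ?thesis
    by (rule kspanI[of A "\<lambda>i. a * c i"])
      (use assms(1,2) c x in \<open>simp_all add: sum_distrib_left mult.assoc subfield_mult\<close>)
qed

lemma coord_in_kspan:
  assumes "is_subfield K" and "finite A" and "j \<in> A"
  shows "u j \<in> kspan K A u"
proof (rule kspanI[of A "\<lambda>i. if i = j then 1 else 0"])
  show "\<forall>i\<in>A. (if i = j then 1 else 0) \<in> K"
    using assms(1) by (simp add: subfield_zero subfield_one)
  have "(\<Sum>i\<in>A. (if i = j then 1 else 0) * u i) = (\<Sum>i\<in>A. if i = j then u i else 0)"
    by (rule sum.cong) auto
  then show "u j = (\<Sum>i\<in>A. (if i = j then 1 else 0) * u i)"
    using assms(2,3) by simp
qed

lemma kspan_subset: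
  assumes "is_subfield K" and "\<And>i. i \<in> A \<Longrightarrow> u i \<in> kspan K B u"
  shows "kspan K A u \<subseteq> kspan K B u"
proof
  fix x assume "x \<in> kspan K A u"
  then obtain c where "\<forall>i\<in>A. c i \<in> K" and "x = (\<Sum>i\<in>A. c i * u i)"
    by (rule kspanE)
  then show "x \<in> kspan K B u"
    using assms by (simp add: kspan_sum kspan_smult)
qed

lemma kspan_mono: "is_subfield K \<Longrightarrow> finite B \<Longrightarrow> A \<subseteq> B \<Longrightarrow> kspan K A u \<subseteq> kspan K B u"
  by (rule kspan_subset) (auto intro: coord_in_kspan)

lemma lin_indep_overD:
  assumes "lin_indep_over K u S" and "\<forall>i\<in>S. c i \<in> K" and "(\<Sum>i\<in>S. c i * u i) = 0"
    and "j \<in> S"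
  shows "c j = 0"
  using assms unfolding lin_indep_over_def by blast

lemma lin_indep_over_subset:
  assumes "is_subfield K" and "lin_indep_over K u S" and "T \<subseteq> S" and "finite S"
  shows "lin_indep_over K u T"
  unfolding lin_indep_over_def
proof (intro allI impI ballI)
  fix c i assume c: "(\<forall>i\<in>T. c i \<in> K) \<and> (\<Sum>i\<in>T. c i * u i) = 0" and "i \<in> T"
  define c' where "c' = (\<lambda>i. if i \<in> T then c i else 0)"
  have c'_in_K: "\<forall>i\<in>S. c' i \<in> K" using assms(1) c by (simp add: c'_def subfield_zero)
  have "(\<Sum>i\<in>S. c' i * u i) = (\<Sum>i\<in>T. c' i * u i)"
    using assms(3,4) by (intro sum.mono_neutral_right) (auto simp: c'_def)
  also have "\<dots> = 0" using c by (simp add: c'_def)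
  finally have "c' i = 0"
    using lin_indep_overD[OF assms(2) c'_in_K] \<open>i \<in> T\<close> assms(3) by blast
  then show "c i = 0" using \<open>i \<in> T\<close> by (simp add: c'_def)
qed

lemma lin_indep_over_imp_nonzero:
  assumes "is_subfield K" and "lin_indep_over K u S" and "j \<in> S"
  shows "u j \<noteq> 0"
proof
  assume "u j = 0"
  let ?c = "\<lambda>i. if i = j then 1 else 0"
  have c_in_K: "\<forall>i\<in>S. ?c i \<in> K" using assms(1) by (simp add: subfield_zero subfield_one)
  have "(\<Sum>i\<in>S. ?c i * u i) = 0" using \<open>u j = 0\<close> by (intro sum.neutral) simp
  from lin_indep_overD[OF assms(2) c_in_K this assms(3)] show False by simp
qed

lemma lin_indep_over_insert:
  assumes "is_subfield K" and "finite S" and "lin_indep_over K u S"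
    and "j \<notin> S" and "u j \<notin> kspan K S u"
  shows "lin_indep_over K u (insert j S)"
  unfolding lin_indep_over_def
proof (intro allI impI)
  fix c assume c: "(\<forall>i\<in>insert j S. c i \<in> K) \<and> (\<Sum>i\<in>insert j S. c i * u i) = 0"
  then have sum0: "c j * u j + (\<Sum>i\<in>S. c i * u i) = 0" using assms(2,4) by simp
  have "c j = 0"
  proof (rule ccontr)
    assume "c j \<noteq> 0"
    then have "u j = - (\<Sum>i\<in>S. c i * u i) / c j"
      using sum0 by (simp add: field_simps add_eq_0_iff)
    also have "\<dots> = (\<Sum>i\<in>S. (- c i / c j) * u i)"
      by (simp add: sum_divide_distrib sum_negf[symmetric])
    finally have "u j = (\<Sum>i\<in>S. (- c i / c j) * u i)" .
    moreover have "\<forall>i\<in>S. - c i / c j \<in> K"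
      using c assms(1) by (simp add: subfield_divide subfield_uminus)
    ultimately have "u j \<in> kspan K S u" by (intro kspanI)
    then show False using assms(5) by simp
  qed
  then have "\<forall>i\<in>S. c i = 0" using assms(3) c sum0 unfolding lin_indep_over_def by simp
  then show "\<forall>i\<in>insert j S. c i = 0" using \<open>c j = 0\<close> by simp
qed

lemma card_kspan_lin_indep:
  assumes "is_subfield K" and "finite S" and "lin_indep_over K u S"
  shows "card (kspan K S u) = card K ^ card S"
proof -
  have "inj_on (\<lambda>c. \<Sum>i\<in>S. c i * u i) (coeff_vecs K S)"
  proof (rule inj_onI)
    fix c d assume c: "c \<in> coeff_vecs K S" and d: "d \<in> coeff_vecs K S"
      and eq: "(\<Sum>i\<in>S. c i * u i) = (\<Sum>i\<in>S. d i * u i)"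
    have "(\<Sum>i\<in>S. (c i - d i) * u i) = 0" using eq by (simp add: left_diff_distrib sum_subtractf)
    moreover have "\<forall>i\<in>S. c i - d i \<in> K"
      using c d assms(1) by (simp add: coeff_vecs_def subfield_diff)
    ultimately have "\<forall>i\<in>S. c i - d i = 0"
      using assms(3) by (blast intro: lin_indep_overD[of K u S "\<lambda>i. c i - d i"])
    then show "c = d" using c d by (auto simp: coeff_vecs_def fun_eq_iff)
  qed
  then show ?thesis by (simp add: kspan_eq_image card_image card_coeff_vecs assms(2))
qed

lemma rank_over_witness:
  obtains S where "S \<subseteq> {..<N}" and "lin_indep_over K u S" and "card S = rank_over K N u"
proof -
  let ?F = "{S. S \<subseteq> {..<N} \<and> lin_indep_over K u S}"
  have "{} \<in> ?F" by (simp add: lin_indep_over_def)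
  then have "rank_over K N u \<in> card ` ?F"
    unfolding rank_over_def by (intro Max_in) auto
  then obtain S where "S \<in> ?F" and "rank_over K N u = card S" by (rule imageE)
  then show ?thesis by (intro that) auto
qed

lemma card_le_rank_over:
  assumes "S \<subseteq> {..<N}" and "lin_indep_over K u S"
  shows "card S \<le> rank_over K N u"
  unfolding rank_over_def using assms by (intro Max_ge) auto

lemma rank_over_le: "rank_over K N u \<le> N"
proof -
  obtain S where "S \<subseteq> {..<N}" and "card S = rank_over K N u" by (rule rank_over_witness)
  then show ?thesis by (metis card_lessThan card_mono finite_lessThan)
qed

lemma lin_indep_over_if_rank_over_eq:
  assumes "rank_over K N u = N"
  shows "lin_indep_over K u {..<N}"
proof -
  obtain S where "S \<subseteq> {..<N}" and "lin_indep_over K u S" and "card S = N"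
    using assms by (metis rank_over_witness)
  moreover from this have "S = {..<N}" by (simp add: card_subset_eq)
  ultimately show ?thesis by simp
qed

lemma rank_over_cong:
  assumes "\<And>i. i < N \<Longrightarrow> u i = u' i"
  shows "rank_over K N u = rank_over K N u'"
proof -
  have "lin_indep_over K u S = lin_indep_over K u' S" if "S \<subseteq> {..<N}" for S
  proof -
    have "(\<Sum>i\<in>S. c i * u i) = (\<Sum>i\<in>S. c i * u' i)" for c
      using that assms by (intro sum.cong) auto
    then show ?thesis by (simp add: lin_indep_over_def)
  qed
  then show ?thesis unfolding rank_over_def by (metis (no_types, lifting) Collect_cong)
qed

lemma kspan_rank_over_witness:
  assumes "is_subfield K" and "S \<subseteq> {..<N}" and "lin_indep_over K u S"
    and "card S = rank_over K N u"
  shows "kspan K S u = kspan K {..<N} u"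
proof
  have "finite S" using assms(2) finite_subset by blast
  show "kspan K S u \<subseteq> kspan K {..<N} u" using assms(1,2) by (simp add: kspan_mono)
  show "kspan K {..<N} u \<subseteq> kspan K S u"
  proof (rule kspan_subset[OF assms(1)])
    fix i assume "i \<in> {..<N}"
    show "u i \<in> kspan K S u"
    proof (rule ccontr)
      assume "u i \<notin> kspan K S u"
      moreover from this have "i \<notin> S" using coord_in_kspan[OF assms(1) \<open>finite S\<close>] by blast
      ultimately have "lin_indep_over K u (insert i S)"
        using lin_indep_over_insert[OF assms(1) \<open>finite S\<close> assms(3)] by blast
      then have "card (insert i S) \<le> rank_over K N u"
        using assms(2) \<open>i \<in> {..<N}\<close> by (intro card_le_rank_over) auto
      then show False using assms(4) \<open>i \<notin> S\<close> \<open>finite S\<close> by simp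
    qed
  qed
qed

lemma card_kspan_rank_over:
  assumes "is_subfield K"
  shows "card (kspan K {..<N} u) = card K ^ rank_over K N u"
proof -
  obtain S where S: "S \<subseteq> {..<N}" "lin_indep_over K u S" "card S = rank_over K N u"
    by (rule rank_over_witness)
  then have "finite S" using finite_subset by blast
  then show ?thesis
    using kspan_rank_over_witness[OF assms S] card_kspan_lin_indep[OF assms _ S(2)] S(3) by simp
qed

lemma rank_over_Suc_if_in_kspan:
  assumes sf: "is_subfield K" and "finite K" and "u N \<in> kspan K {..<N} u"
  shows "rank_over K (Suc N) u = rank_over K N u"
proof -
  have "kspan K {..<Suc N} u \<subseteq> kspan K {..<N} u"
    using assms(3) coord_in_kspan[OF sf] by (intro kspan_subset[OF sf]) (auto simp: less_Suc_eq)
  moreover have "kspan K {..<N} u \<subseteq> kspan K {..<Suc N} u" using sf by (simp add: kspan_mono)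
  ultimately have "card K ^ rank_over K (Suc N) u = card K ^ rank_over K N u"
    using card_kspan_rank_over[OF sf] by (metis subset_antisym)
  then show ?thesis by (simp only: power_inject_exp[OF card_subfield_gt_1[OF sf assms(2)]])
qed

lemma rank_over_Suc_if_notin_kspan:
  assumes sf: "is_subfield K" and "finite K" and "u N \<notin> kspan K {..<N} u"
  shows "rank_over K (Suc N) u = Suc (rank_over K N u)"
proof -
  obtain S where S: "S \<subseteq> {..<N}" "lin_indep_over K u S" "card S = rank_over K N u"
    by (rule rank_over_witness)
  have "finite S" and "N \<notin> S" using S(1) finite_subset by auto
  have span_S: "kspan K S u = kspan K {..<N} u" using kspan_rank_over_witness[OF sf S] .
  have indep: "lin_indep_over K u (insert N S)"
    using lin_indep_over_insert[OF sf \<open>finite S\<close> S(2) \<open>N \<notin> S\<close>] assms(3) span_S by simp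
  have "kspan K {..<Suc N} u = kspan K (insert N S) u"
  proof
    show "kspan K {..<Suc N} u \<subseteq> kspan K (insert N S) u"
    proof (rule kspan_subset[OF sf])
      fix i assume "i \<in> {..<Suc N}"
      show "u i \<in> kspan K (insert N S) u"
      proof (cases "i = N")
        case False
        then have "u i \<in> kspan K S u"
          using \<open>i \<in> {..<Suc N}\<close> span_S coord_in_kspan[OF sf, of "{..<N}"] by auto
        then show ?thesis using kspan_mono[OF sf, of "insert N S" S] \<open>finite S\<close> by auto
      qed (use \<open>finite S\<close> coord_in_kspan[OF sf] in simp)
    qed
    show "kspan K (insert N S) u \<subseteq> kspan K {..<Suc N} u"
      using S(1) sf by (intro kspan_mono) auto
  qed
  then have "card K ^ rank_over K (Suc N) u = card K ^ Suc (rank_over K N u)"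
    using card_kspan_rank_over[OF sf, of "Suc N" u] card_kspan_lin_indep[OF sf _ indep]
      \<open>finite S\<close> \<open>N \<notin> S\<close> S(3)
    by simp
  then show ?thesis by (simp only: power_inject_exp[OF card_subfield_gt_1[OF sf assms(2)]])
qed

lemma rank_over_Suc:
  assumes "is_subfield K" and "finite K"
  shows "rank_over K (Suc N) u = rank_over K N u + (if u N \<in> kspan K {..<N} u then 0 else 1)"
  using rank_over_Suc_if_in_kspan[OF assms] rank_over_Suc_if_notin_kspan[OF assms] by simp

lemma card_lincomb_fibre:
  assumes sf: "is_subfield K" and "finite K" and t: "t \<in> kspan K {..<N} u"
  shows "card {c \<in> coeff_vecs K {..<N}. (\<Sum>i<N. c i * u i) = t} * card K ^ rank_over K N u
    = card K ^ N"
proof -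
  let ?f = "\<lambda>c. \<Sum>i<N. c i * u i"
  let ?C = "coeff_vecs K {..<N}"
  let ?F = "\<lambda>s. {c \<in> ?C. ?f c = s}"
  have fin: "finite ?C" using finite_coeff_vecs[OF _ \<open>finite K\<close>] by simp
  have span: "kspan K {..<N} u = ?f ` ?C" by (rule kspan_eq_image)
  have same: "card (?F s) = card (?F 0)" if s: "s \<in> kspan K {..<N} u" for s
  proof -
    obtain c\<^sub>s where c\<^sub>s: "c\<^sub>s \<in> ?C" "?f c\<^sub>s = s" using s span by auto
    have "bij_betw (\<lambda>c i. c i - c\<^sub>s i) (?F s) (?F 0)"
      by (rule bij_betw_byWitness[where f' = "\<lambda>c i. c i + c\<^sub>s i"])
        (use c\<^sub>s sf in \<open>auto simp: coeff_vecs_def subfield_diff subfield_add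
            left_diff_distrib sum_subtractf distrib_right sum.distrib\<close>)
    then show ?thesis by (rule bij_betw_same_card)
  qed
  have "card ?C = (\<Sum>s\<in>kspan K {..<N} u. card (?F s))"
    using card_eq_sum sum.group[OF fin _ , of "kspan K {..<N} u" ?f "\<lambda>_. 1::nat"] span fin
    by (simp add: finite_imageI)
  also have "\<dots> = card (kspan K {..<N} u) * card (?F 0)" using same by simp
  finally have "card K ^ N = card K ^ rank_over K N u * card (?F 0)"
    by (simp add: card_coeff_vecs card_kspan_rank_over[OF sf])
  then show ?thesis using same[OF t] by (simp add: mult.commute)
qed

lemma fst_qpow: "fst a = 1 \<Longrightarrow> fst (qpow q a n) = n"
  by (induction n) (auto simp: qprod_def)

lemma hcoeff_qprod_linear:
  assumes "fst b = 1"
  shows "hcoeff (qprod q a b) u x = q ^ u * hcoeff a u x * hcoeff b 0 (x - real u)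
    + (if u = 0 then 0 else q ^ (u - 1) * hcoeff a (u - 1) x * hcoeff b 1 (x - real (u - 1)))"
proof -
  let ?g = "\<lambda>i. q ^ (i * fst b) * hcoeff a i x * hcoeff b (u - i) (x - real i)"
  have "(\<Sum>i\<le>u. ?g i) = q ^ u * hcoeff a u x * hcoeff b 0 (x - real u)
    + (if u = 0 then 0 else q ^ (u - 1) * hcoeff a (u - 1) x * hcoeff b 1 (x - real (u - 1)))"
  proof (cases u)
    case (Suc k)
    have "(\<Sum>i<k. ?g i) = 0" using assms by (intro sum.neutral) (auto simp: hcoeff_def Suc)
    then show ?thesis using assms by (simp add: Suc lessThan_Suc_atMost[symmetric])
  qed (use assms in simp)
  moreover have "hcoeff (qprod q a b) u x = (if u \<le> fst a + 1 then (\<Sum>i\<le>u. ?g i) else 0)"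
    by (simp add: hcoeff_def qprod_def assms)
  moreover have "hcoeff a j x = 0" if "j > fst a" for j using that by (simp add: hcoeff_def)
  ultimately show ?thesis by auto
qed

definition xqy_coeff :: "nat \<Rightarrow> nat \<Rightarrow> nat \<Rightarrow> nat \<Rightarrow> real" where
  "xqy_coeff q m r w = hcoeff (qpow (real q) (hp_xqy (real q)) r) w (real m)"

definition xmy_coeff :: "nat \<Rightarrow> nat \<Rightarrow> nat \<Rightarrow> nat \<Rightarrow> real" where
  "xmy_coeff q m r w = hcoeff (qpow (real q) hp_xmy r) w (real m)"

lemma hp_xqy_simps:
  "fst (hp_xqy q) = 1" "hcoeff (hp_xqy q) 0 x = 1" "hcoeff (hp_xqy q) (Suc 0) x = q powr x - 1"
  by (simp_all add: hp_xqy_def hcoeff_def)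

lemma hp_xmy_simps: "fst hp_xmy = 1" "hcoeff hp_xmy 0 x = 1" "hcoeff hp_xmy (Suc 0) x = - 1"
  by (simp_all add: hp_xmy_def hcoeff_def)

lemma xqy_coeff_Suc:
  assumes "q > 0"
  shows "xqy_coeff q m (Suc r) w = real q ^ w * xqy_coeff q m r w
    + (if w = 0 then 0 else (real q ^ m - real q ^ (w - 1)) * xqy_coeff q m r (w - 1))"
proof (cases w)
  case (Suc k)
  have "real q ^ k * (real q powr (real m - real k) - 1) = real q ^ m - real q ^ k"
    using assms by (simp add: powr_diff powr_realpow right_diff_distrib)
  then show ?thesis
    unfolding xqy_coeff_def qpow.simps
    by (simp add: Suc hcoeff_qprod_linear hp_xqy_simps algebra_simps)
qed (simp add: xqy_coeff_def hcoeff_qprod_linear hp_xqy_simps)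

lemma xmy_coeff_Suc:
  "xmy_coeff q m (Suc r) w = real q ^ w * xmy_coeff q m r w
    - (if w = 0 then 0 else real q ^ (w - 1) * xmy_coeff q m r (w - 1))"
  unfolding xmy_coeff_def qpow.simps by (simp add: hcoeff_qprod_linear hp_xmy_simps)

text \<open>The number of vectors of rank \<open>w\<close> in \<open>GF(q^m)^r\<close> whose inner product with a fixed vector
  of rank \<open>r\<close> is \<open>b\<close>; the flag records whether \<open>b = 0\<close>.\<close>

definition rank_dot_formula :: "nat \<Rightarrow> nat \<Rightarrow> nat \<Rightarrow> nat \<Rightarrow> bool \<Rightarrow> real" where
  "rank_dot_formula q m r w z =
     (xqy_coeff q m r w + (if z then real q ^ m - 1 else - 1) * xmy_coeff q m r w) / real q ^ m"

lemma rank_dot_formula_0: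
  "q > 0 \<Longrightarrow> rank_dot_formula q m 0 w z = (if w = 0 \<and> z then 1 else 0)"
  by (simp add: rank_dot_formula_def xqy_coeff_def xmy_coeff_def hcoeff_def)

lemma rank_dot_formula_Suc:
  assumes "q > 0"
  shows "rank_dot_formula q m (Suc r) w z = real q ^ w * rank_dot_formula q m r w z
    + (if w = 0 then 0 else xqy_coeff q m r (w - 1) - real q ^ (w - 1) * rank_dot_formula q m r (w - 1) z)"
proof -
  have "real q ^ m > 0" using assms by simp
  then show ?thesis
    unfolding rank_dot_formula_def xqy_coeff_Suc[OF assms] xmy_coeff_Suc
    by (simp add: field_simps)
qed

lemma rank_dot_formula_sum:
  assumes "q > 0"
  shows "rank_dot_formula q m r w True + (real q ^ m - 1) * rank_dot_formula q m r w False
    = xqy_coeff q m r w"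
proof -
  have "real q ^ m > 0" using assms by simp
  then show ?thesis by (simp add: rank_dot_formula_def field_simps)
qed

definition dot :: "nat \<Rightarrow> (nat \<Rightarrow> 'a::field) \<Rightarrow> (nat \<Rightarrow> 'a) \<Rightarrow> 'a" where
  "dot N u v = (\<Sum>i<N. u i * v i)"

definition rank_dot_count :: "'a::field set \<Rightarrow> nat \<Rightarrow> (nat \<Rightarrow> 'a) \<Rightarrow> nat \<Rightarrow> 'a \<Rightarrow> nat" where
  "rank_dot_count K N v w b = card {u \<in> vecs N. rank_over K N u = w \<and> dot N u v = b}"

lemma dot_upd: "dot (Suc N) (u(N := t)) v = dot N u v + t * v N"
proof -
  have "(\<Sum>i<N. (u(N := t)) i * v i) = (\<Sum>i<N. u i * v i)" by (intro sum.cong) auto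
  then show ?thesis by (simp add: dot_def)
qed

lemma rank_over_upd:
  assumes "is_subfield K" and "finite K"
  shows "rank_over K (Suc N) (u(N := t))
    = rank_over K N u + (if t \<in> kspan K {..<N} u then 0 else 1)"
proof -
  have "rank_over K N (u(N := t)) = rank_over K N u" by (rule rank_over_cong) simp
  moreover have "kspan K {..<N} (u(N := t)) = kspan K {..<N} u" by (rule kspan_cong) simp
  ultimately show ?thesis using rank_over_Suc[OF assms, of N "u(N := t)"] by simp
qed

lemma inj_on_fun_upd_vecs: "inj_on (\<lambda>u. u(N := f u)) (vecs N)"
proof (rule inj_onI)
  fix x y assume "x \<in> vecs N" "y \<in> vecs N" and eq: "x(N := f x) = y(N := f y)"
  show "x = y"
  proof
    fix i
    show "x i = y i"
      using fun_cong[OF eq, of i] \<open>x \<in> vecs N\<close> \<open>y \<in> vecs N\<close> by (cases "i = N") (auto simp: vecs_def)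
  qed
qed

lemma rank_dot_count_Suc:
  fixes v :: "nat \<Rightarrow> 'a::{field,finite}" and b :: 'a
  assumes sf: "is_subfield K" and vN: "v N \<noteq> 0"
  defines "t u \<equiv> (b - dot N u v) / v N"
  shows "rank_dot_count K (Suc N) v w b
    = card {u \<in> vecs N. rank_over K N u = w \<and> t u \<in> kspan K {..<N} u}
    + card {u \<in> vecs N. Suc (rank_over K N u) = w \<and> t u \<notin> kspan K {..<N} u}"
proof -
  let ?A = "{u \<in> vecs N. rank_over K N u = w \<and> t u \<in> kspan K {..<N} u}"
  let ?B = "{u \<in> vecs N. Suc (rank_over K N u) = w \<and> t u \<notin> kspan K {..<N} u}"
  let ?S = "{u \<in> vecs (Suc N). rank_over K (Suc N) u = w \<and> dot (Suc N) u v = b}"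
  let ?ext = "\<lambda>u. u(N := t u)"
  have ext_in_S: "?ext u \<in> ?S \<longleftrightarrow> u \<in> ?A \<union> ?B" if "u \<in> vecs N" for u
  proof -
    have "dot (Suc N) (?ext u) v = b" using vN by (simp add: dot_upd t_def)
    moreover have "?ext u \<in> vecs (Suc N)" using that by (simp add: vecs_def)
    ultimately show ?thesis
      using that by (auto simp: rank_over_upd[OF sf finite])
  qed
  have "?S = ?ext ` (?A \<union> ?B)"
  proof
    show "?ext ` (?A \<union> ?B) \<subseteq> ?S" using ext_in_S by blast
    show "?S \<subseteq> ?ext ` (?A \<union> ?B)"
    proof
      fix u assume u: "u \<in> ?S"
      have "dot N (u(N := 0)) v = dot N u v" by (simp add: dot_def)
      then have u_eq: "u = ?ext (u(N := 0))"
        using u vN dot_upd[of N "u(N := 0)" "u N" v] by (auto simp: t_def field_simps)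
      have "u(N := 0) \<in> vecs N" using u by (auto simp: vecs_def)
      moreover have "?ext (u(N := 0)) \<in> ?S" using u by (subst u_eq[symmetric])
      ultimately have "u(N := 0) \<in> ?A \<union> ?B" using ext_in_S by blast
      then show "u \<in> ?ext ` (?A \<union> ?B)" by (rule image_eqI[where f = ?ext, OF u_eq])
    qed
  qed
  moreover have "inj_on ?ext (?A \<union> ?B)"
    by (rule inj_on_subset[OF inj_on_fun_upd_vecs]) blast
  ultimately have "card ?S = card (?A \<union> ?B)" by (simp add: card_image)
  also have "\<dots> = card ?A + card ?B"
    by (rule card_Un_disjoint) (auto intro: finite_subset[OF _ finite_vecs])
  finally show ?thesis by (simp add: rank_dot_count_def)
qed

lemma lin_indep_over_shift:
  assumes sf: "is_subfield K" and v: "lin_indep_over K v {..<Suc N}"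
    and c: "c \<in> coeff_vecs K {..<N}"
  shows "lin_indep_over K (\<lambda>i. v i + c i * v N) {..<N}"
  unfolding lin_indep_over_def
proof (intro allI impI ballI)
  fix d j assume d: "(\<forall>i\<in>{..<N}. d i \<in> K) \<and> (\<Sum>i\<in>{..<N}. d i * (v i + c i * v N)) = 0"
    and "j \<in> {..<N}"
  define d' where "d' = d(N := \<Sum>i<N. d i * c i)"
  have "(\<Sum>i<Suc N. d' i * v i) = (\<Sum>i<N. d i * v i) + (\<Sum>i<N. d i * c i) * v N"
    by (simp add: d'_def)
  also have "\<dots> = (\<Sum>i\<in>{..<N}. d i * (v i + c i * v N))"
    by (simp add: distrib_left sum.distrib sum_distrib_right mult.assoc)
  finally have "(\<Sum>i\<in>{..<Suc N}. d' i * v i) = 0" using d by simp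
  moreover have "\<forall>i\<in>{..<Suc N}. d' i \<in> K"
    using d c sf by (auto simp: d'_def coeff_vecs_def intro!: subfield_sum subfield_mult)
  ultimately have "d' j = 0" using lin_indep_overD[OF v] \<open>j \<in> {..<N}\<close> by simp
  then show "d j = 0" using \<open>j \<in> {..<N}\<close> by (simp add: d'_def)
qed

lemma sum_rank_dot_count_shift:
  fixes v :: "nat \<Rightarrow> 'a::{field,finite}" and b :: 'a
  assumes sf: "is_subfield K" and vN: "v N \<noteq> 0"
  defines "t u \<equiv> (b - dot N u v) / v N"
  shows "card K ^ w * (\<Sum>c\<in>coeff_vecs K {..<N}. rank_dot_count K N (\<lambda>i. v i + c i * v N) w b)
    = card K ^ N * card {u \<in> vecs N. rank_over K N u = w \<and> t u \<in> kspan K {..<N} u}"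
proof -
  let ?V = "{u \<in> vecs N. rank_over K N u = w}"
  let ?C = "coeff_vecs K {..<N}"
  let ?lc = "\<lambda>u c. \<Sum>i<N. c i * u i"
  have finV: "finite ?V" using finite_vecs by (rule finite_subset[rotated]) auto
  have finC: "finite ?C" by (simp add: finite_coeff_vecs)
  have dot_shift: "dot N u (\<lambda>i. v i + c i * v N) = b \<longleftrightarrow> ?lc u c = t u" for u c
  proof -
    have "(\<Sum>i<N. u i * (c i * v N)) = ?lc u c * v N"
      unfolding sum_distrib_right by (simp add: mult_ac)
    then have "dot N u (\<lambda>i. v i + c i * v N) = dot N u v + ?lc u c * v N"
      by (simp add: dot_def distrib_left sum.distrib)
    then show ?thesis using vN by (auto simp: t_def field_simps)
  qed
  have fibre: "card K ^ w * card {c \<in> ?C. ?lc u c = t u}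
      = (if t u \<in> kspan K {..<N} u then card K ^ N else 0)" if "u \<in> ?V" for u
  proof (cases "t u \<in> kspan K {..<N} u")
    case True
    then show ?thesis using card_lincomb_fibre[OF sf finite True] that by (simp add: mult.commute)
  next
    case False
    then have "{c \<in> ?C. ?lc u c = t u} = {}" by (auto simp: kspan_eq_image image_iff)
    then show ?thesis using False by (metis card.empty mult_0_right)
  qed
  have "(\<Sum>c\<in>?C. rank_dot_count K N (\<lambda>i. v i + c i * v N) w b)
      = (\<Sum>c\<in>?C. card {u \<in> ?V. ?lc u c = t u})"
    unfolding rank_dot_count_def dot_shift by (intro sum.cong) (auto intro: arg_cong[where f = card])
  also have "\<dots> = (\<Sum>u\<in>?V. card {c \<in> ?C. ?lc u c = t u})"
    using sum.swap_restrict[OF finC finV, of "\<lambda>_ _. 1::nat" "\<lambda>c u. ?lc u c = t u"]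
    by (simp add: sum_constant conj_assoc)
  finally have "card K ^ w * (\<Sum>c\<in>?C. rank_dot_count K N (\<lambda>i. v i + c i * v N) w b)
      = (\<Sum>u\<in>?V. if t u \<in> kspan K {..<N} u then card K ^ N else 0)"
    by (simp add: sum_distrib_left fibre)
  also have "\<dots> = card K ^ N * card {u \<in> ?V. t u \<in> kspan K {..<N} u}"
    using finV by (simp add: sum.If_cases Int_def)
  also have "{u \<in> ?V. t u \<in> kspan K {..<N} u}
      = {u \<in> vecs N. rank_over K N u = w \<and> t u \<in> kspan K {..<N} u}"
    by auto
  finally show ?thesis .
qed

lemma sum_rank_dot_count:
  fixes v :: "nat \<Rightarrow> 'a::{field,finite}"
  shows "(\<Sum>b\<in>UNIV. rank_dot_count K N v w b) = card {u \<in> vecs N. rank_over K N u = w}"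
proof -
  let ?V = "{u \<in> vecs N. rank_over K N u = w}"
  have "finite ?V" using finite_vecs by (rule finite_subset[rotated]) auto
  then have "card ?V = (\<Sum>b\<in>UNIV. card {u \<in> ?V. dot N u v = b})"
    using sum.group[of ?V UNIV "\<lambda>u. dot N u v" "\<lambda>_. 1::nat"] by simp
  then show ?thesis by (simp add: rank_dot_count_def conj_assoc)
qed

context
  fixes K :: "'a::{field,finite} set" and q m :: nat
  assumes sf: "is_subfield K" and cK: "card K = q" and cU: "card (UNIV :: 'a set) = q ^ m"
begin

lemma subfield_card_pos: "q > 0"
  using card_subfield_gt_1[OF sf finite] cK by simp

lemma card_rank_eq_if_counts:
  assumes "\<And>b. real (rank_dot_count K N v w b) = rank_dot_formula q m N w (b = 0)"
  shows "real (card {u \<in> vecs N. rank_over K N u = w}) = xqy_coeff q m N w"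
proof -
  have "real (card {u \<in> vecs N. rank_over K N u = w})
      = (\<Sum>b::'a\<in>UNIV. rank_dot_formula q m N w (b = 0))"
    unfolding sum_rank_dot_count[of K N v w, symmetric] of_nat_sum assms by simp
  also have "\<dots> = rank_dot_formula q m N w True
      + (\<Sum>b::'a\<in>UNIV - {0}. rank_dot_formula q m N w False)"
    by (simp add: sum.remove[of UNIV 0])
  also have "\<dots> = xqy_coeff q m N w"
    using rank_dot_formula_sum[OF subfield_card_pos] cU subfield_card_pos
    by (simp add: card_Diff_singleton of_nat_diff)
  finally show ?thesis .
qed

lemma card_rank_hit_eq_if_counts:
  fixes v :: "nat \<Rightarrow> 'a"
  assumes vN: "v N \<noteq> 0"
    and counts: "\<And>c. c \<in> coeff_vecs K {..<N} \<Longrightarrow>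
      real (rank_dot_count K N (\<lambda>i. v i + c i * v N) w b) = rank_dot_formula q m N w (b = 0)"
  shows "real (card {u \<in> vecs N. rank_over K N u = w \<and> (b - dot N u v) / v N \<in> kspan K {..<N} u})
    = real q ^ w * rank_dot_formula q m N w (b = 0)"
proof -
  let ?C = "coeff_vecs K {..<N}"
  have "real (\<Sum>c\<in>?C. rank_dot_count K N (\<lambda>i. v i + c i * v N) w b)
      = real q ^ N * rank_dot_formula q m N w (b = 0)"
    unfolding of_nat_sum using counts cK by (simp add: card_coeff_vecs)
  then show ?thesis
    using arg_cong[OF sum_rank_dot_count_shift[where v = v and N = N and w = w and b = b, OF sf vN], of real]
      subfield_card_pos
    by (simp add: cK mult_ac)
qed

theorem rank_dot_count_eq_formula:
  fixes v :: "nat \<Rightarrow> 'a"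
  assumes "lin_indep_over K v {..<N}"
  shows "real (rank_dot_count K N v w b) = rank_dot_formula q m N w (b = 0)"
  using assms
proof (induction N arbitrary: v w b)
  case 0
  have "vecs 0 = {\<lambda>_. 0 :: 'a}" by (auto simp: vecs_def)
  then have "rank_dot_count K 0 v w b = (if w = 0 \<and> b = 0 then 1 else 0)"
    using rank_over_le[of K 0] by (simp add: rank_dot_count_def dot_def)
  then show ?case using subfield_card_pos by (simp add: rank_dot_formula_0)
next
  case (Suc N)
  have vN: "v N \<noteq> 0" using lin_indep_over_imp_nonzero[OF sf Suc.prems] by simp
  define t where "t u = (b - dot N u v) / v N" for u
  let ?V = "\<lambda>k. {u \<in> vecs N. rank_over K N u = k}"
  let ?H = "\<lambda>k. {u \<in> vecs N. rank_over K N u = k \<and> t u \<in> kspan K {..<N} u}"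
  have card_V: "real (card (?V k)) = xqy_coeff q m N k" for k
    using Suc.IH lin_indep_over_subset[OF sf Suc.prems] by (intro card_rank_eq_if_counts[where v = v]) auto
  have card_H: "real (card (?H k)) = real q ^ k * rank_dot_formula q m N k (b = 0)" for k
    unfolding t_def using Suc.IH lin_indep_over_shift[OF sf Suc.prems]
    by (intro card_rank_hit_eq_if_counts[where v = v and N = N, OF vN]) auto
  have card_V_diff_H: "real (card (?V k - ?H k)) = real (card (?V k)) - real (card (?H k))" for k
  proof -
    have sub: "?H k \<subseteq> ?V k" by blast
    have fin: "finite (?V k)" using finite_vecs by (rule finite_subset[rotated]) auto
    show ?thesis
      using card_Diff_subset[OF finite_subset[OF sub fin] sub] card_mono[OF fin sub]
      by (simp add: of_nat_diff)
  qed
  have "rank_dot_count K (Suc N) v w b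
      = card (?H w) + card {u \<in> vecs N. Suc (rank_over K N u) = w \<and> t u \<notin> kspan K {..<N} u}"
    unfolding t_def by (rule rank_dot_count_Suc[where v = v and N = N, OF sf vN])
  also have "card {u \<in> vecs N. Suc (rank_over K N u) = w \<and> t u \<notin> kspan K {..<N} u}
      = (if w = 0 then 0 else card (?V (w - 1) - ?H (w - 1)))"
    by (cases w) (auto intro: arg_cong[where f = card])
  finally show ?case
    by (simp add: card_V_diff_H card_V card_H rank_dot_formula_Suc[OF subfield_card_pos])
qed

end

lemma dual_code_span1: "dual_code N (span1 N v) = {u \<in> vecs N. dot N u v = 0}"
proof -
  have "(\<Sum>i<N. u i * (a * v i)) = a * dot N u v" for u and a
    by (simp add: dot_def sum_distrib_left mult_ac)
  then show ?thesis
    unfolding dual_code_def span1_def by (auto simp: dot_def)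
qed

lemma rank_wt_enum_by_rank:
  assumes "finite C"
  shows "rank_wt_enum K N C x y = (\<Sum>w\<le>N. real (card {u \<in> C. rank_over K N u = w}) * y ^ w * x ^ (N - w))"
proof -
  have "rank_wt_enum K N C x y
      = (\<Sum>w\<le>N. \<Sum>u\<in>{u \<in> C. rank_over K N u = w}. y ^ rank_over K N u * x ^ (N - rank_over K N u))"
    unfolding rank_wt_enum_def
    by (rule sum.group[symmetric, OF assms finite_atMost]) (auto simp: rank_over_le)
  also have "\<dots> = (\<Sum>w\<le>N. real (card {u \<in> C. rank_over K N u = w}) * y ^ w * x ^ (N - w))"
    by (intro sum.cong) auto
  finally show ?thesis .
qed

lemma heval_qpow:
  "fst a = 1 \<Longrightarrow> heval (qpow q a r) x y m = (\<Sum>w\<le>r. hcoeff (qpow q a r) w m * y ^ w * x ^ (r - w))"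
  by (simp add: heval_def fst_qpow)

lemma sum_rank_dot_formula_eq_heval:
  assumes "q > 0"
  shows "(\<Sum>w\<le>r. rank_dot_formula q m r w True * y ^ w * x ^ (r - w))
    = real q powr (- real m) * (heval (qpow (real q) (hp_xqy (real q)) r) x y (real m)
        + (real q ^ m - 1) * heval (qpow (real q) hp_xmy r) x y (real m))"
proof -
  have Q: "real q ^ m > 0" and Q_powr: "real q powr (- real m) = 1 / real q ^ m"
    using assms by (simp_all add: powr_minus_divide powr_realpow)
  have "(\<Sum>w\<le>r. rank_dot_formula q m r w True * y ^ w * x ^ (r - w))
      = (\<Sum>w\<le>r. (xqy_coeff q m r w * y ^ w * x ^ (r - w)
          + (real q ^ m - 1) * (xmy_coeff q m r w * y ^ w * x ^ (r - w))) / real q ^ m)"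
    using Q by (intro sum.cong) (simp_all add: rank_dot_formula_def field_simps)
  also have "\<dots> = ((\<Sum>w\<le>r. xqy_coeff q m r w * y ^ w * x ^ (r - w))
      + (real q ^ m - 1) * (\<Sum>w\<le>r. xmy_coeff q m r w * y ^ w * x ^ (r - w))) / real q ^ m"
    by (simp add: sum_divide_distrib[symmetric] sum.distrib sum_distrib_left)
  finally show ?thesis
    by (simp add: Q_powr heval_qpow hp_xqy_simps hp_xmy_simps xqy_coeff_def xmy_coeff_def)
qed

theorem proposition15:
  fixes K :: "'a::{field,finite} set" and q m r :: nat and v :: "nat \<Rightarrow> 'a"
  assumes "is_subfield K"
    and "card K = q"
    and "card (UNIV :: 'a set) = q ^ m"
    and "r \<le> m"
    and "v \<in> vecs r"
    and "rank_over K r v = r"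
  shows "\<forall>x y. rank_wt_enum K r (dual_code r (span1 r v)) x y =
      (real q) powr (- real m) *
        (heval (qpow (real q) (hp_xqy (real q)) r) x y (real m)
         + ((real q) ^ m - 1) * heval (qpow (real q) hp_xmy r) x y (real m))"
proof (intro allI)
  fix x y :: real
  let ?C = "dual_code r (span1 r v)"
  have "finite ?C" unfolding dual_code_span1 using finite_vecs by (rule finite_subset[rotated]) auto
  then have "rank_wt_enum K r ?C x y
      = (\<Sum>w\<le>r. real (rank_dot_count K r v w 0) * y ^ w * x ^ (r - w))"
    by (simp add: rank_wt_enum_by_rank dual_code_span1 rank_dot_count_def conj_ac)
  also have "\<dots> = (\<Sum>w\<le>r. rank_dot_formula q m r w True * y ^ w * x ^ (r - w))"
    using rank_dot_count_eq_formula[OF assms(1-3) lin_indep_over_if_rank_over_eq[OF assms(6)]]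
    by simp
  also have "\<dots> = real q powr (- real m) *
      (heval (qpow (real q) (hp_xqy (real q)) r) x y (real m)
        + (real q ^ m - 1) * heval (qpow (real q) hp_xmy r) x y (real m))"
    using subfield_card_pos[OF assms(1-3)] by (rule sum_rank_dot_formula_eq_heval)
  finally show "rank_wt_enum K r ?C x y = real q powr (- real m) *
      (heval (qpow (real q) (hp_xqy (real q)) r) x y (real m)
        + (real q ^ m - 1) * heval (qpow (real q) hp_xmy r) x y (real m))" .
qed

end
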